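(* There exists an edge-coloring of the complete graph on a countably infinite vertex set which contains a rainbow $k$-cycle for every integer $k \ge 3$ with $k \not\equiv 2 \pmod 4$, and contains no rainbow $k$-cycle for any $k \equiv 2 \pmod 4$. Moreover, for every $n$ there is a finite complete graph (an induced subgraph of this one, with the induced coloring) whose coloring contains a rainbow $k$-cycle for every $3 \le k \le n$ with $k \not\equiv 2 \pmod 4$, and contains no rainbow cycle of any length $\equiv 2 \pmod 4$.
   Context: A coloring is an arbitrary (not necessarily proper) assignment of colors, from an arbitrary set, to the edges of an undirected complete graph. A rainbow $k$-cycle is a cycle through $k$ distinct vertices whose $k$ edges all receive pairwise distinct colors. *)

theory Defs
  imports Main
begin

text \<open>An edge-colouring of the complete graph on vertex type 'v is a function
  from two-element vertex sets {u,w} to colours (values on other sets are irrelevant).\<close>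

definition rainbow_cycle :: "('v set \<Rightarrow> 'c) \<Rightarrow> 'v set \<Rightarrow> nat \<Rightarrow> bool" where
  "rainbow_cycle c V k \<longleftrightarrow> 3 \<le> k \<and>
     (\<exists>v :: nat \<Rightarrow> 'v. inj_on v {..<k} \<and> v ` {..<k} \<subseteq> V \<and>
        inj_on (\<lambda>i. c {v i, v (Suc i mod k)}) {..<k})"

end

theory Submission
  imports Defs
begin

text \<open>Orient the edge \<open>{u, w}\<close> as an arc \<open>u \<rightarrow> w\<close> when \<open>w \<equiv> u + 1 (mod 4)\<close>, colour every arc by
  its head and all remaining edges by one common colour. In a rainbow cycle the heads of its
  arcs are distinct. If every edge is an arc, this forces all arcs to point the same way around
  the cycle, so going once around adds \<open>\<plusminus>k\<close> modulo 4 and \<open>4\<close> divides \<open>k\<close>. Otherwise exactly one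
  edge is not an arc; arcs join vertices of different parity and that edge does not, while a
  closed walk changes parity an even number of times, so \<open>k - 1\<close> is even. Conversely the path
  \<open>0, 1, \<dots>, k - 1\<close> closed up to a cycle is rainbow whenever \<open>k\<close> is odd or divisible by 4.\<close>

definition arc :: "nat \<Rightarrow> nat \<Rightarrow> bool" where
  "arc u w \<longleftrightarrow> w mod 4 = Suc u mod 4"

definition arc_colouring :: "nat set \<Rightarrow> nat" where
  "arc_colouring S =
     (if \<exists>u\<in>S. \<exists>w\<in>S. arc u w then Suc (THE w. w \<in> S \<and> (\<exists>u\<in>S. arc u w)) else 0)"

lemma residue_mod_4_cases:
  fixes r :: nat
  obtains "r mod 4 = 0" | "r mod 4 = 1" | "r mod 4 = 2" | "r mod 4 = 3"
proof -
  have "r mod 4 = 0 \<or> r mod 4 = 1 \<or> r mod 4 = 2 \<or> r mod 4 = 3"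
    by presburger
  then show thesis
    using that by auto
qed

lemma arc_iff_mod_4: "arc u w \<longleftrightarrow> w mod 4 = Suc (u mod 4) mod 4"
  by (simp add: arc_def mod_Suc_eq)

lemma arc_asym: "arc u w \<Longrightarrow> \<not> arc w u"
  unfolding arc_iff_mod_4
  by (cases u rule: residue_mod_4_cases; cases w rule: residue_mod_4_cases) simp_all

lemma arc_irrefl: "\<not> arc u u"
  using arc_asym by blast

lemma odd_add_iff_arc: "odd (u + w) \<longleftrightarrow> arc u w \<or> arc w u"
proof -
  have "odd (u + w) \<longleftrightarrow> odd (u mod 4 + w mod 4)"
    by presburger
  then show ?thesis
    unfolding arc_iff_mod_4
    by (cases u rule: residue_mod_4_cases; cases w rule: residue_mod_4_cases) simp_all
qed

lemma mod_4_neq_2_iff: "(k::nat) mod 4 \<noteq> 2 \<longleftrightarrow> odd k \<or> 4 dvd k"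
  by presburger

lemma arc_colouring_arc:
  assumes "arc u w"
  shows "arc_colouring {u, w} = Suc w"
proof -
  have "(THE w'. w' \<in> {u, w} \<and> (\<exists>u'\<in>{u, w}. arc u' w')) = w"
    by (rule the_equality) (use assms arc_irrefl arc_asym in blast)+
  then show ?thesis
    using assms by (auto simp: arc_colouring_def)
qed

lemma arc_colouring_no_arc:
  assumes "\<not> arc u w" "\<not> arc w u"
  shows "arc_colouring {u, w} = 0"
  using assms arc_irrefl by (auto simp: arc_colouring_def)

lemma sum_rotate_mod:
  fixes f :: "nat \<Rightarrow> 'a::comm_monoid_add"
  shows "(\<Sum>i<k. f (Suc i mod k)) = (\<Sum>i<k. f i)"
proof (cases k)
  case (Suc m)
  have "(\<Sum>i<Suc m. f (Suc i mod Suc m)) = (\<Sum>i<m. f (Suc i mod Suc m)) + f 0"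
    by simp
  also have "(\<Sum>i<m. f (Suc i mod Suc m)) = (\<Sum>i<m. f (Suc i))"
    by (rule sum.cong) auto
  also have "(\<Sum>i<m. f (Suc i)) + f 0 = (\<Sum>i<Suc m. f i)"
    by (simp only: sum.lessThan_Suc_shift add.commute)
  finally show ?thesis
    using Suc by (simp only:)
qed simp

lemma cyclic_induct:
  assumes "P i" "i < k" and step: "\<And>j. j < k \<Longrightarrow> P j \<Longrightarrow> P (Suc j mod k)" and "j < k"
  shows "P j"
proof -
  have "P ((i + n) mod k)" for n
  proof (induction n)
    case (Suc n)
    have "(i + Suc n) mod k = Suc ((i + n) mod k) mod k"
      by (simp add: mod_Suc_eq)
    then show ?case
      using step[OF _ Suc] \<open>i < k\<close> by simp
  qed (use assms in simp)
  moreover have "(i + (k - i + j)) mod k = j"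
    using assms by simp
  ultimately show ?thesis
    by metis
qed

lemma closed_walk_even_card_odd_steps:
  fixes v :: "nat \<Rightarrow> nat"
  shows "even (card {i\<in>{..<k}. odd (v i + v (Suc i mod k))})"
proof -
  have "(\<Sum>i<k. v i + v (Suc i mod k)) = 2 * (\<Sum>i<k. v i)"
    by (simp add: sum.distrib sum_rotate_mod)
  then show ?thesis
    using even_sum_iff[of "{..<k}" "\<lambda>i. v i + v (Suc i mod k)"] by simp
qed

lemma closed_walk_mod_steps:
  fixes v :: "nat \<Rightarrow> nat"
  assumes "\<And>i. i < k \<Longrightarrow> (v i + a) mod m = (v (Suc i mod k) + b) mod m"
  shows "k * a mod m = k * b mod m"
proof -
  have "(\<Sum>i<k. v i + a) mod m = (\<Sum>i<k. (v i + a) mod m) mod m"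
    by (simp add: mod_sum_eq)
  also have "\<dots> = (\<Sum>i<k. (v (Suc i mod k) + b) mod m) mod m"
    using assms by simp
  also have "\<dots> = (\<Sum>i<k. v (Suc i mod k) + b) mod m"
    by (simp add: mod_sum_eq)
  finally have "((\<Sum>i<k. v i) + k * a) mod m = ((\<Sum>i<k. v i) + k * b) mod m"
    by (simp add: sum.distrib sum_rotate_mod)
  then show ?thesis
    by (simp add: nat_mod_eq_iff)
qed

lemma arc_colouring_rainbow_walk_odd:
  fixes v :: "nat \<Rightarrow> nat"
  assumes rainbow: "inj_on (\<lambda>i. arc_colouring {v i, v (Suc i mod k)}) {..<k}"
    and "i\<^sub>0 < k" and no_arc: "\<not> arc (v i\<^sub>0) (v (Suc i\<^sub>0 mod k))" "\<not> arc (v (Suc i\<^sub>0 mod k)) (v i\<^sub>0)"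
  shows "odd k"
proof -
  have only_i\<^sub>0: "i = i\<^sub>0"
    if "i < k" "\<not> arc (v i) (v (Suc i mod k))" "\<not> arc (v (Suc i mod k)) (v i)" for i
  proof (rule inj_onD[OF rainbow])
    show "arc_colouring {v i, v (Suc i mod k)} = arc_colouring {v i\<^sub>0, v (Suc i\<^sub>0 mod k)}"
      using that no_arc by (simp add: arc_colouring_no_arc)
  qed (use that \<open>i\<^sub>0 < k\<close> in simp_all)
  have "{i\<in>{..<k}. odd (v i + v (Suc i mod k))} = {..<k} - {i\<^sub>0}"
    unfolding odd_add_iff_arc using no_arc by (auto dest: only_i\<^sub>0)
  then have "even (card ({..<k} - {i\<^sub>0}))"
    using closed_walk_even_card_odd_steps[where v = v and k = k] by (simp only:)
  then show ?thesis
    using \<open>i\<^sub>0 < k\<close> by simp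
qed

lemma arc_colouring_rainbow_arc_walk_4_dvd:
  fixes v :: "nat \<Rightarrow> nat"
  assumes rainbow: "inj_on (\<lambda>i. arc_colouring {v i, v (Suc i mod k)}) {..<k}"
    and arcs: "\<And>i. i < k \<Longrightarrow> arc (v i) (v (Suc i mod k)) \<or> arc (v (Suc i mod k)) (v i)"
  shows "4 dvd k"
proof -
  define nx where "nx i = Suc i mod k" for i
  have "k \<noteq> 1"
    using arcs[of 0] arc_irrefl by auto
  have nx_less: "nx i < k" if "i < k" for i
    using that by (simp add: nx_def)
  have forward_step: "arc (v (nx i)) (v (nx (nx i)))" if "i < k" "arc (v i) (v (nx i))" for i
  proof (rule ccontr)
    assume "\<not> arc (v (nx i)) (v (nx (nx i)))"
    then have "arc (v (nx (nx i))) (v (nx i))"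
      using arcs nx_less[OF \<open>i < k\<close>] by (auto simp: nx_def)
    then have "arc_colouring {v (nx i), v (nx (nx i))} = Suc (v (nx i))"
      using arc_colouring_arc by (metis insert_commute)
    also have "\<dots> = arc_colouring {v i, v (nx i)}"
      using arc_colouring_arc[OF \<open>arc (v i) (v (nx i))\<close>] by simp
    finally have "nx i = i"
      unfolding nx_def by (rule inj_onD[OF rainbow]) (use \<open>i < k\<close> in simp_all)
    with \<open>i < k\<close> \<open>k \<noteq> 1\<close> show False
      by (auto simp: nx_def mod_Suc split: if_splits)
  qed
  show ?thesis
  proof (cases "\<exists>i<k. arc (v i) (v (nx i))")
    case True
    then have forward: "arc (v i) (v (nx i))" if "i < k" for i
      using cyclic_induct[where P = "\<lambda>i. arc (v i) (v (nx i))"] forward_step that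
      by (metis nx_def)
    have "k * 1 mod 4 = k * 0 mod 4"
      by (rule closed_walk_mod_steps[where v = v]) (use forward in \<open>simp add: arc_def nx_def\<close>)
    then show ?thesis
      by presburger
  next
    case False
    then have backward: "arc (v (nx i)) (v i)" if "i < k" for i
      using arcs that by (auto simp: nx_def)
    have "k * 0 mod 4 = k * 1 mod 4"
      by (rule closed_walk_mod_steps[where v = v]) (use backward in \<open>simp add: arc_def nx_def\<close>)
    then show ?thesis
      by presburger
  qed
qed

lemma rainbow_cycle_arc_colouring_length:
  assumes "rainbow_cycle arc_colouring V k"
  shows "odd k \<or> 4 dvd k"
proof -
  obtain v :: "nat \<Rightarrow> nat" where rainbow: "inj_on (\<lambda>i. arc_colouring {v i, v (Suc i mod k)}) {..<k}"
    using assms unfolding rainbow_cycle_def by blast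
  show ?thesis
  proof (cases "\<exists>i<k. \<not> arc (v i) (v (Suc i mod k)) \<and> \<not> arc (v (Suc i mod k)) (v i)")
    case True
    then show ?thesis
      using arc_colouring_rainbow_walk_odd[OF rainbow] by blast
  next
    case False
    then show ?thesis
      using arc_colouring_rainbow_arc_walk_4_dvd[OF rainbow] by blast
  qed
qed

lemma rainbow_cycle_arc_colouring_lessThan:
  assumes "3 \<le> k" "odd k \<or> 4 dvd k"
  shows "rainbow_cycle arc_colouring {..<k} k"
proof -
  have colour: "arc_colouring {i, Suc i mod k} = (if i < k - 1 then i + 2 else if 4 dvd k then 1 else 0)"
    if "i < k" for i
  proof (cases "i < k - 1")
    case True
    then show ?thesis
      using arc_colouring_arc[of i "Suc i"] by (simp add: arc_def)
  next
    case False
    then have "Suc i = k"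
      using that by simp
    then have wrap: "Suc i mod k = 0"
      by simp
    show ?thesis
    proof (cases "4 dvd k")
      case True
      then have "arc i 0"
        using \<open>Suc i = k\<close> by (simp add: arc_def dvd_eq_mod_eq_0)
      then show ?thesis
        using arc_colouring_arc[of i 0] wrap False True by simp
    next
      case False
      then have "odd (Suc i)"
        using assms(2) \<open>Suc i = k\<close> by simp
      then have "even i"
        by simp
      then have "\<not> arc i 0" "\<not> arc 0 i"
        using odd_add_iff_arc[of i 0] by simp_all
      then show ?thesis
        using arc_colouring_no_arc wrap \<open>\<not> i < k - 1\<close> False by simp
    qed
  qed
  have "inj_on (\<lambda>i. arc_colouring {i, Suc i mod k}) {..<k}"
  proof (rule inj_onI)
    fix i j
    assume "i \<in> {..<k}" "j \<in> {..<k}"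
      and "arc_colouring {i, Suc i mod k} = arc_colouring {j, Suc j mod k}"
    then show "i = j"
      using colour[of i] colour[of j] by (auto split: if_splits)
  qed
  then show ?thesis
    using \<open>3 \<le> k\<close> unfolding rainbow_cycle_def by (intro conjI exI[of _ id]) auto
qed

lemma rainbow_cycle_mono: "rainbow_cycle c V k \<Longrightarrow> V \<subseteq> W \<Longrightarrow> rainbow_cycle c W k"
  unfolding rainbow_cycle_def by blast

theorem claim7:
  shows "\<exists>c :: nat set \<Rightarrow> nat.
    (\<forall>k. 3 \<le> k \<and> k mod 4 \<noteq> 2 \<longrightarrow> rainbow_cycle c UNIV k) \<and>
    (\<forall>k. k mod 4 = 2 \<longrightarrow> \<not> rainbow_cycle c UNIV k) \<and>
    (\<forall>n. \<exists>V :: nat set. finite V \<and>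
        (\<forall>k. 3 \<le> k \<and> k \<le> n \<and> k mod 4 \<noteq> 2 \<longrightarrow> rainbow_cycle c V k) \<and>
        (\<forall>k. k mod 4 = 2 \<longrightarrow> \<not> rainbow_cycle c V k))"
proof -
  have exists: "rainbow_cycle arc_colouring V k" if "3 \<le> k" "k mod 4 \<noteq> 2" "{..<k} \<subseteq> V" for V k
    using rainbow_cycle_arc_colouring_lessThan rainbow_cycle_mono mod_4_neq_2_iff that by blast
  have absent: "k mod 4 \<noteq> 2" if "rainbow_cycle arc_colouring V k" for V k
    using rainbow_cycle_arc_colouring_length mod_4_neq_2_iff that by blast
  show ?thesis
    by (intro exI[of _ arc_colouring] conjI allI impI exI[of _ "{..<n}" for n])
      (auto intro: exists dest: absent)
qed

end
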